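(* Let $X_1,\dots,X_n$ be features and $Y$ a target that is not a.s. constant, $\mathcal{F}=\{1,\dots,n\}$. Then for every $i\in\mathcal{F}$, $$\frac{\mathrm{Dep}(X_i,Y)}{n}\le \mathrm{FI}(i)\le \mathrm{Dep}(\mathcal{F},Y).$$
   Context: All random variables are discrete with finite support and defined on a common probability space. For discrete random variables (or random vectors) $X$ and $Y$, define $$\mathrm{UD}(X,Y):=\sum_x p_X(x)\sum_y \bigl|p_{Y\mid X=x}(y)-p_Y(y)\bigr|,$$ and, when $Y$ is not almost surely constant, $\mathrm{Dep}(X,Y):=\mathrm{UD}(X,Y)/\mathrm{UD}(Y,Y)$. Given features $X_1,\dots,X_n$ with index set $\mathcal{F}=\{1,\dots,n\}$ and $S\subseteq\mathcal{F}$, write $X_S=(X_i)_{i\in S}$ ($X_\emptyset$ constant) and $\mathrm{Dep}(S,Y):=\mathrm{Dep}(X_S,Y)$. The Berkelmans–Pries feature importance is $$\mathrm{FI}(i):=\sum_{S\subseteq\mathcal{F}\setminus\{i\}}\frac{|S|!\,(n-|S|-1)!}{n!}\bigl(\mathrm{Dep}(S\cup\{i\},Y)-\mathrm{Dep}(S,Y)\bigr).$$ *)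

theory Defs
  imports "HOL-Probability.Probability"
begin

definition UD :: "'w pmf \<Rightarrow> ('w \<Rightarrow> 'a) \<Rightarrow> ('w \<Rightarrow> 'b) \<Rightarrow> real" where
  "UD Omega X Y =
     (\<Sum>x \<in> X ` set_pmf Omega. pmf (map_pmf X Omega) x *
        (\<Sum>y \<in> Y ` set_pmf Omega.
           \<bar>pmf (map_pmf (\<lambda>w. (X w, Y w)) Omega) (x, y) / pmf (map_pmf X Omega) x
            - pmf (map_pmf Y Omega) y\<bar>))"

definition Dep :: "'w pmf \<Rightarrow> ('w \<Rightarrow> 'a) \<Rightarrow> ('w \<Rightarrow> 'b) \<Rightarrow> real" where
  "Dep Omega X Y = UD Omega X Y / UD Omega Y Y"

definition featvec :: "(nat \<Rightarrow> 'w \<Rightarrow> 'v) \<Rightarrow> nat set \<Rightarrow> 'w \<Rightarrow> (nat \<Rightarrow> 'v)" where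
  "featvec X S = (\<lambda>w i. if i \<in> S then X i w else undefined)"

definition DepS :: "'w pmf \<Rightarrow> (nat \<Rightarrow> 'w \<Rightarrow> 'v) \<Rightarrow> nat set \<Rightarrow> ('w \<Rightarrow> 'b) \<Rightarrow> real" where
  "DepS Omega X S Y = Dep Omega (featvec X S) Y"

definition FI :: "'w pmf \<Rightarrow> nat \<Rightarrow> (nat \<Rightarrow> 'w \<Rightarrow> 'v) \<Rightarrow> ('w \<Rightarrow> 'b) \<Rightarrow> nat \<Rightarrow> real" where
  "FI Omega n X Y i =
     (\<Sum>S \<in> Pow ({1..n} - {i}).
        fact (card S) * fact (n - card S - 1) / fact n
        * (DepS Omega X (S \<union> {i}) Y - DepS Omega X S Y))"

end

theory Submission
  imports Defs
begin

text \<open>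
  Multiplying out the conditional probabilities shows that \<open>UD(X,Y)\<close> is the total discrepancy
  between the joint law of \<open>(X,Y)\<close> and the product of its marginals.  By the triangle
  inequality over fibres this discrepancy can only shrink when \<open>X\<close> is replaced by a function
  of \<open>X\<close>; hence \<open>Dep(S,Y)\<close> is monotone in \<open>S\<close> and vanishes at \<open>S = {}\<close>.  The Shapley weights
  of \<open>FI(i)\<close> sum to one, so \<open>FI(i)\<close> is a convex combination of nonnegative increments, each at
  most \<open>Dep(F,Y)\<close>, while the term for \<open>S = {}\<close> alone already contributes \<open>Dep(X_i,Y)/n\<close>.
\<close>

definition joint_discrepancy :: "('z \<times> 'y) pmf \<Rightarrow> real" where
  "joint_discrepancy Q = (\<Sum>z \<in> fst ` set_pmf Q. \<Sum>y \<in> snd ` set_pmf Q.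
      \<bar>pmf Q (z, y) - pmf (map_pmf fst Q) z * pmf (map_pmf snd Q) y\<bar>)"

lemma UD_eq_joint_discrepancy:
  "UD Omega X Y = joint_discrepancy (map_pmf (\<lambda>w. (X w, Y w)) Omega)"
proof -
  let ?Q = "map_pmf (\<lambda>w. (X w, Y w)) Omega"
  have "fst ` set_pmf ?Q = X ` set_pmf Omega" "snd ` set_pmf ?Q = Y ` set_pmf Omega"
    by (simp_all add: image_image)
  moreover have "map_pmf fst ?Q = map_pmf X Omega" "map_pmf snd ?Q = map_pmf Y Omega"
    by (simp_all add: map_pmf_comp)
  moreover have "pmf (map_pmf X Omega) x * \<bar>pmf ?Q (x, y) / pmf (map_pmf X Omega) x - q\<bar>
      = \<bar>pmf ?Q (x, y) - pmf (map_pmf X Omega) x * q\<bar>"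
    if "x \<in> X ` set_pmf Omega" for x y q
  proof -
    have "pmf (map_pmf X Omega) x > 0" using that by (intro pmf_positive) simp
    then have "pmf (map_pmf X Omega) x * \<bar>pmf ?Q (x, y) / pmf (map_pmf X Omega) x - q\<bar>
        = \<bar>pmf (map_pmf X Omega) x * (pmf ?Q (x, y) / pmf (map_pmf X Omega) x - q)\<bar>"
      by (simp add: abs_mult)
    then show ?thesis using \<open>pmf (map_pmf X Omega) x > 0\<close> by (simp add: algebra_simps)
  qed
  ultimately show ?thesis
    unfolding UD_def joint_discrepancy_def by (simp add: sum_distrib_left)
qed

lemma pmf_map_finite:
  assumes "finite (set_pmf Q)"
  shows "pmf (map_pmf g Q) b = (\<Sum>a \<in> {a \<in> set_pmf Q. g a = b}. pmf Q a)"
proof -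
  have "pmf (map_pmf g Q) b = measure Q (g -` {b} \<inter> set_pmf Q)"
    by (simp add: pmf_map measure_Int_set_pmf)
  also have "g -` {b} \<inter> set_pmf Q = {a \<in> set_pmf Q. g a = b}" by auto
  finally show ?thesis
    using assms by (simp add: measure_measure_pmf_finite)
qed

lemma joint_discrepancy_map_fst_le:
  assumes fin: "finite (set_pmf Q)"
  shows "joint_discrepancy (map_pmf (apfst f) Q) \<le> joint_discrepancy Q"
proof -
  let ?Q' = "map_pmf (apfst f) Q"
  define A where "A = fst ` set_pmf Q"
  define B where "B = snd ` set_pmf Q"
  define q1 where "q1 = map_pmf fst Q"
  define q2 where "q2 = map_pmf snd Q"
  have fA: "finite A" using fin by (simp add: A_def)
  have fst_set: "fst ` set_pmf ?Q' = f ` A" and snd_set: "snd ` set_pmf ?Q' = B"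
    by (force simp: A_def B_def image_image apfst_def map_prod_def)+
  have snd_map: "map_pmf snd ?Q' = q2"
    by (simp add: q2_def map_pmf_comp apfst_def map_prod_def split_def)
  have fst_pmf: "pmf (map_pmf fst ?Q') x = (\<Sum>z \<in> {z \<in> A. f z = x}. pmf q1 z)" for x
  proof -
    have "map_pmf fst ?Q' = map_pmf f q1"
      by (simp add: q1_def map_pmf_comp apfst_def map_prod_def split_def)
    moreover have "set_pmf q1 = A" by (simp add: q1_def A_def)
    ultimately show ?thesis using fA by (simp add: pmf_map_finite)
  qed
  have joint_pmf: "pmf ?Q' (x, y) = (\<Sum>z \<in> {z \<in> A. f z = x}. pmf Q (z, y))" for x y
  proof -
    have "pmf ?Q' (x, y) = (\<Sum>p \<in> {p \<in> set_pmf Q. apfst f p = (x, y)}. pmf Q p)"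
      using fin by (rule pmf_map_finite)
    also have "\<dots> = (\<Sum>p \<in> {z \<in> A. f z = x} \<times> {y}. pmf Q p)"
    proof (rule sum.mono_neutral_left)
      show "finite ({z \<in> A. f z = x} \<times> {y})" using fA by simp
      show "{p \<in> set_pmf Q. apfst f p = (x, y)} \<subseteq> {z \<in> A. f z = x} \<times> {y}"
        by (force simp: A_def apfst_def map_prod_def)
    qed (auto simp: apfst_def map_prod_def set_pmf_eq)
    also have "\<dots> = (\<Sum>z \<in> {z \<in> A. f z = x}. pmf Q (z, y))"
      by (rule sum.reindex_bij_witness[where i="\<lambda>z. (z, y)" and j=fst]) auto
    finally show ?thesis .
  qed
  have "joint_discrepancy ?Q'
      = (\<Sum>x \<in> f ` A. \<Sum>y \<in> B. \<bar>\<Sum>z \<in> {z \<in> A. f z = x}. pmf Q (z, y) - pmf q1 z * pmf q2 y\<bar>)"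
    unfolding joint_discrepancy_def fst_set snd_set snd_map fst_pmf joint_pmf
    by (simp add: sum_subtractf sum_distrib_right)
  also have "\<dots> \<le> (\<Sum>x \<in> f ` A. \<Sum>y \<in> B. \<Sum>z \<in> {z \<in> A. f z = x}.
      \<bar>pmf Q (z, y) - pmf q1 z * pmf q2 y\<bar>)"
    by (intro sum_mono sum_abs)
  also have "\<dots> = (\<Sum>x \<in> f ` A. \<Sum>z \<in> {z \<in> A. f z = x}. \<Sum>y \<in> B.
      \<bar>pmf Q (z, y) - pmf q1 z * pmf q2 y\<bar>)"
    by (intro sum.cong refl sum.swap)
  also have "\<dots> = (\<Sum>z \<in> A. \<Sum>y \<in> B. \<bar>pmf Q (z, y) - pmf q1 z * pmf q2 y\<bar>)"
    using fA by (intro sum.group) auto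
  also have "\<dots> = joint_discrepancy Q"
    by (simp add: joint_discrepancy_def A_def B_def q1_def q2_def)
  finally show ?thesis .
qed

lemma UD_nonneg: "UD Omega X Y \<ge> 0"
  unfolding UD_def by (intro sum_nonneg mult_nonneg_nonneg) auto

lemma UD_le_of_factor:
  assumes "finite (Z ` set_pmf Omega)" "finite (Y ` set_pmf Omega)"
    and "\<And>w. w \<in> set_pmf Omega \<Longrightarrow> X w = f (Z w)"
  shows "UD Omega X Y \<le> UD Omega Z Y"
proof -
  let ?Q = "map_pmf (\<lambda>w. (Z w, Y w)) Omega"
  have "map_pmf (\<lambda>w. (X w, Y w)) Omega = map_pmf (\<lambda>w. apfst f (Z w, Y w)) Omega"
    using assms(3) by (intro map_pmf_cong) auto
  then have joint: "map_pmf (\<lambda>w. (X w, Y w)) Omega = map_pmf (apfst f) ?Q"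
    by (simp add: map_pmf_comp)
  have "set_pmf ?Q \<subseteq> Z ` set_pmf Omega \<times> Y ` set_pmf Omega" by auto
  then have "finite (set_pmf ?Q)"
    using assms(1,2) by (meson finite_SigmaI finite_subset)
  then show ?thesis
    unfolding UD_eq_joint_discrepancy joint by (rule joint_discrepancy_map_fst_le)
qed

lemma Dep_le_of_factor:
  assumes "finite (Z ` set_pmf Omega)" "finite (Y ` set_pmf Omega)"
    and "\<And>w. w \<in> set_pmf Omega \<Longrightarrow> X w = f (Z w)"
  shows "Dep Omega X Y \<le> Dep Omega Z Y"
  unfolding Dep_def using UD_le_of_factor[of Z Omega Y X f] assms
  by (intro divide_right_mono UD_nonneg) auto

lemma UD_const_left: "UD Omega (\<lambda>w. c) Y = 0"
proof -
  have "(\<lambda>w. c) ` set_pmf Omega = {c}" using set_pmf_not_empty[of Omega] by auto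
  moreover have "map_pmf (\<lambda>w. (c, Y w)) Omega = map_pmf (Pair c) (map_pmf Y Omega)"
    by (simp add: map_pmf_comp)
  moreover have "pmf (map_pmf (Pair c) (map_pmf Y Omega)) (c, y) = pmf (map_pmf Y Omega) y" for y
    by (simp add: pmf_map_inj' inj_on_def)
  ultimately show ?thesis unfolding UD_def by simp
qed

lemma Dep_const_left: "Dep Omega (\<lambda>w. c) Y = 0"
  by (simp add: Dep_def UD_const_left)

lemma finite_featvec_image:
  assumes "finite S" "\<And>j. j \<in> S \<Longrightarrow> finite (X j ` set_pmf Omega)"
  shows "finite (featvec X S ` set_pmf Omega)"
proof (rule finite_subset)
  show "featvec X S ` set_pmf Omega \<subseteq> PiE S (\<lambda>j. X j ` set_pmf Omega)"
    by (auto simp: featvec_def PiE_def extensional_def)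
  show "finite (PiE S (\<lambda>j. X j ` set_pmf Omega))"
    using assms by (intro finite_PiE)
qed

lemma DepS_mono:
  assumes "S \<subseteq> T" "finite T" "\<And>j. j \<in> T \<Longrightarrow> finite (X j ` set_pmf Omega)"
    and "finite (Y ` set_pmf Omega)"
  shows "DepS Omega X S Y \<le> DepS Omega X T Y"
  unfolding DepS_def
proof (rule Dep_le_of_factor[OF finite_featvec_image[OF assms(2,3)] assms(4)])
  fix w
  show "featvec X S w = (\<lambda>v j. if j \<in> S then v j else undefined) (featvec X T w)"
    using assms(1) by (auto simp: featvec_def fun_eq_iff)
qed

lemma DepS_empty: "DepS Omega X {} Y = 0"
  by (simp add: DepS_def featvec_def Dep_const_left)

lemma DepS_singleton:
  assumes "finite (X i ` set_pmf Omega)" "finite (Y ` set_pmf Omega)"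
  shows "DepS Omega X {i} Y = Dep Omega (X i) Y"
  unfolding DepS_def
proof (rule antisym)
  show "Dep Omega (featvec X {i}) Y \<le> Dep Omega (X i) Y"
    by (rule Dep_le_of_factor[OF assms, where f="\<lambda>a j. if j = i then a else undefined"])
      (auto simp: featvec_def)
  show "Dep Omega (X i) Y \<le> Dep Omega (featvec X {i}) Y"
    using assms
    by (intro Dep_le_of_factor[where f="\<lambda>v. v i"] finite_featvec_image) (auto simp: featvec_def)
qed

definition shapley_weight :: "nat \<Rightarrow> nat \<Rightarrow> real" where
  "shapley_weight n k = fact k * fact (n - k - 1) / fact n"

lemma sum_Pow_card:
  assumes "finite A"
  shows "(\<Sum>S \<in> Pow A. g (card S)) = (\<Sum>k \<le> card A. real (card A choose k) * g k)"
proof -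
  have "(\<Sum>S \<in> Pow A. g (card S)) = (\<Sum>k \<le> card A. \<Sum>S \<in> {S \<in> Pow A. card S = k}. g (card S))"
    using assms by (intro sum.group[symmetric]) (auto intro: card_mono)
  also have "\<dots> = (\<Sum>k \<le> card A. real (card A choose k) * g k)"
  proof (intro sum.cong refl)
    fix k
    have "{S \<in> Pow A. card S = k} = {S. S \<subseteq> A \<and> card S = k}" by auto
    then show "(\<Sum>S \<in> {S \<in> Pow A. card S = k}. g (card S)) = real (card A choose k) * g k"
      using n_subsets[OF assms, of k] by simp
  qed
  finally show ?thesis .
qed

lemma sum_shapley_weight:
  assumes "finite F" "i \<in> F"
  shows "(\<Sum>S \<in> Pow (F - {i}). shapley_weight (card F) (card S)) = 1"
proof -
  define n where "n = card F"
  have n_pos: "n \<ge> 1" using assms by (auto simp: n_def Suc_le_eq card_gt_0_iff)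
  have card_A: "card (F - {i}) = n - 1" using assms by (simp add: n_def)
  have summand: "real ((n - 1) choose k) * shapley_weight n k = 1 / real n" if "k \<le> n - 1" for k
  proof -
    have "fact k * fact (n - 1 - k) * ((n - 1) choose k) = (fact (n - 1) :: nat)"
      using that by (rule binomial_fact_lemma)
    then have "fact k * fact (n - 1 - k) * real ((n - 1) choose k) = fact (n - 1)"
      by (metis of_nat_fact of_nat_mult)
    moreover have "(fact n :: real) = real n * fact (n - 1)"
      using n_pos by (simp add: fact_reduce)
    moreover have "n - k - 1 = n - 1 - k" by simp
    ultimately show ?thesis
      using n_pos by (simp add: shapley_weight_def field_simps)
  qed
  have "(\<Sum>S \<in> Pow (F - {i}). shapley_weight n (card S))
      = (\<Sum>k \<le> n - 1. real ((n - 1) choose k) * shapley_weight n k)"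
    using assms(1) by (simp add: sum_Pow_card card_A)
  also have "\<dots> = (\<Sum>k \<le> n - 1. 1 / real n)" using summand by (intro sum.cong) auto
  also have "\<dots> = 1" using n_pos by simp
  finally show ?thesis by (simp add: n_def)
qed

definition shapley_value :: "('a set \<Rightarrow> real) \<Rightarrow> 'a set \<Rightarrow> 'a \<Rightarrow> real" where
  "shapley_value v F i = (\<Sum>S \<in> Pow (F - {i}).
      shapley_weight (card F) (card S) * (v (S \<union> {i}) - v S))"

lemma shapley_value_bounds:
  fixes v :: "'a set \<Rightarrow> real"
  assumes "finite F" "i \<in> F"
    and mono: "\<And>S T. S \<subseteq> T \<Longrightarrow> T \<subseteq> F \<Longrightarrow> v S \<le> v T"
    and empty: "v {} = 0"
  shows "v {i} / card F \<le> shapley_value v F i" and "shapley_value v F i \<le> v F"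
proof -
  have subsets: "S \<union> {i} \<subseteq> F" if "S \<in> Pow (F - {i})" for S
    using that assms(2) by auto
  have weight_nonneg: "shapley_weight (card F) k \<ge> 0" for k
    by (simp add: shapley_weight_def)
  have terms_nonneg: "shapley_weight (card F) (card S) * (v (S \<union> {i}) - v S) \<ge> 0"
    if "S \<in> Pow (F - {i})" for S
    using weight_nonneg[of "card S"] mono[OF _ subsets[OF that], of S]
    by (intro mult_nonneg_nonneg) auto
  have "shapley_weight (card F) 0 = 1 / card F"
    using assms(1,2) by (cases "card F") (auto simp: shapley_weight_def)
  then have "v {i} / card F = shapley_weight (card F) (card {}) * (v ({} \<union> {i}) - v {})"
    by (simp add: empty)
  moreover have "shapley_weight (card F) (card {}) * (v ({} \<union> {i}) - v {}) \<le> shapley_value v F i"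
    unfolding shapley_value_def
    using member_le_sum[where i="{}" and A="Pow (F - {i})"
        and f="\<lambda>S. shapley_weight (card F) (card S) * (v (S \<union> {i}) - v S)"]
      assms(1) terms_nonneg by simp
  ultimately show "v {i} / card F \<le> shapley_value v F i" by simp
  have "shapley_value v F i \<le> (\<Sum>S \<in> Pow (F - {i}). shapley_weight (card F) (card S) * v F)"
    unfolding shapley_value_def
  proof (intro sum_mono mult_left_mono weight_nonneg)
    fix S assume "S \<in> Pow (F - {i})"
    then have "S \<union> {i} \<subseteq> F" by (rule subsets)
    then have "v (S \<union> {i}) \<le> v F" and "v {} \<le> v S"
      by (rule mono[OF _ order_refl], intro mono) auto
    then show "v (S \<union> {i}) - v S \<le> v F" using empty by simp
  qed
  also have "\<dots> = v F"
    using sum_shapley_weight[OF assms(1,2)] by (simp add: sum_distrib_right[symmetric])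
  finally show "shapley_value v F i \<le> v F" .
qed

theorem mainTheorem5:
  fixes Omega :: "'w pmf" and n :: nat
    and X :: "nat \<Rightarrow> 'w \<Rightarrow> 'v" and Y :: "'w \<Rightarrow> 'b" and i :: nat
  assumes fin_X: "\<And>j. j \<in> {1..n} \<Longrightarrow> finite (X j ` set_pmf Omega)"
    and fin_Y: "finite (Y ` set_pmf Omega)"
    and Y_nonconst: "\<not> (\<exists>c. AE w in measure_pmf Omega. Y w = c)"
    and i_in: "i \<in> {1..n}"
  shows "Dep Omega (X i) Y / real n \<le> FI Omega n X Y i
         \<and> FI Omega n X Y i \<le> DepS Omega X {1..n} Y"
proof -
  let ?v = "\<lambda>S. DepS Omega X S Y"
  have mono: "?v S \<le> ?v T" if "S \<subseteq> T" "T \<subseteq> {1..n}" for S T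
  proof (rule DepS_mono[OF that(1) _ _ fin_Y])
    show "finite T" using that(2) finite_subset by blast
    show "finite (X j ` set_pmf Omega)" if "j \<in> T" for j
      using fin_X that \<open>T \<subseteq> {1..n}\<close> by blast
  qed
  have "FI Omega n X Y i = shapley_value ?v {1..n} i"
    by (simp add: FI_def shapley_value_def shapley_weight_def)
  moreover have "?v {i} = Dep Omega (X i) Y"
    using fin_X[OF i_in] fin_Y by (rule DepS_singleton)
  ultimately show ?thesis
    using shapley_value_bounds[of "{1..n}" i ?v, OF _ i_in mono DepS_empty] by simp
qed

end
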